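(* For the four-node network described in the context, with arbitrary crossover probabilities, define $\mathbb{C}_{1,4}=1-H(p_{1,4})$, $\mathbb{C}'=1-H(p')$, $\mathbb{C}''=1-H(p'')$ with $$p' = [(1-p_{1,3})(1-p_{2,3})+p_{1,3}p_{2,3}]\,p_{3,4} + [p_{1,3}(1-p_{2,3})+(1-p_{1,3})p_{2,3}](1-p_{3,4}),$$ $$p'' = p_{1,3}(1-p_{2,3})(1-p_{3,4})(1-p_{1,4}) + (1-p_{1,3})p_{2,3}(1-p_{3,4})(1-p_{1,4}) + (1-p_{1,3})(1-p_{2,3})p_{3,4}(1-p_{1,4}) + (1-p_{1,3})(1-p_{2,3})(1-p_{3,4})p_{1,4} + (1-p_{1,3})p_{2,3}p_{3,4}p_{1,4} + p_{1,3}(1-p_{2,3})p_{3,4}p_{1,4} + p_{1,3}p_{2,3}(1-p_{3,4})p_{1,4} + p_{1,3}p_{2,3}p_{3,4}(1-p_{1,4}).$$ Let $\Lambda_{\text{nc}}$ be the convex hull of the rate pairs $(R_A,R_B)$ with $R_A\le\mathbb{C}_{1,4}$, $R_B\le\mathbb{C}''$ (the achievable region of independent network-then-channel decoding); $\Lambda_{\text{serial}}$ the convex hull of those with $R_A\le\mathbb{C}_{1,4}$, $R_B\le\mathbb{C}'$ (the achievable region of serial decoding); and $\Lambda_{\text{joint}}$ the convex hull of those with $R_A\le\mathbb{C}_{1,4}+\mathbb{C}'-\mathbb{C}''$, $R_B\le\mathbb{C}'$, $R_A+R_B\le\mathbb{C}_{1,4}+\mathbb{C}'$ (the achievable region of joint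 decoding). Then $$\Lambda_{\text{nc}} \subseteq \Lambda_{\text{serial}} \subseteq \Lambda_{\text{joint}}.$$
   Context: Network: nodes $1,2,3,4$ with directed links $1\to3$, $1\to4$, $2\to3$, $3\to4$. Each link $i\to j$ is a binary symmetric channel with crossover probability $p_{i,j}\in[0,1]$; the link channels are independent and memoryless. Node 1 sends the same codeword (encoding message $A$) on links $1\to3$ and $1\to4$, node 2 sends a codeword (encoding message $B$) on link $2\to3$, and node 3 forwards the bitwise XOR of its two received vectors on link $3\to4$; node 4 decodes from its two received vectors. $H(p)=-p\log p-(1-p)\log(1-p)$ is the binary entropy function (base 2). Rate regions are subsets of pairs $(R_A,R_B)$ of nonnegative rates. *)

theory Defs
  imports "HOL-Analysis.Analysis"
begin

text \<open>Binary entropy (base 2). With Isabelle's conventions log 2 0 = 0, so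
  the term 0 * log 2 0 is 0, matching the usual convention 0 log 0 = 0.\<close>
definition bin_entropy :: "real \<Rightarrow> real" where
  "bin_entropy p = - p * log 2 p - (1 - p) * log 2 (1 - p)"

definition p_prime :: "real \<Rightarrow> real \<Rightarrow> real \<Rightarrow> real" where
  "p_prime p13 p23 p34 =
     ((1 - p13) * (1 - p23) + p13 * p23) * p34
   + (p13 * (1 - p23) + (1 - p13) * p23) * (1 - p34)"

definition p_dprime :: "real \<Rightarrow> real \<Rightarrow> real \<Rightarrow> real \<Rightarrow> real" where
  "p_dprime p13 p23 p34 p14 =
     p13 * (1 - p23) * (1 - p34) * (1 - p14)
   + (1 - p13) * p23 * (1 - p34) * (1 - p14)
   + (1 - p13) * (1 - p23) * p34 * (1 - p14)
   + (1 - p13) * (1 - p23) * (1 - p34) * p14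
   + (1 - p13) * p23 * p34 * p14
   + p13 * (1 - p23) * p34 * p14
   + p13 * p23 * (1 - p34) * p14
   + p13 * p23 * p34 * (1 - p14)"

definition cap14 :: "real \<Rightarrow> real" where
  "cap14 p14 = 1 - bin_entropy p14"

definition cap' :: "real \<Rightarrow> real \<Rightarrow> real \<Rightarrow> real" where
  "cap' p13 p23 p34 = 1 - bin_entropy (p_prime p13 p23 p34)"

definition cap'' :: "real \<Rightarrow> real \<Rightarrow> real \<Rightarrow> real \<Rightarrow> real" where
  "cap'' p13 p23 p34 p14 = 1 - bin_entropy (p_dprime p13 p23 p34 p14)"

definition region_nc :: "real \<Rightarrow> real \<Rightarrow> real \<Rightarrow> real \<Rightarrow> (real \<times> real) set" where
  "region_nc p13 p23 p34 p14 = convex hull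
     {(ra, rb). 0 \<le> ra \<and> 0 \<le> rb \<and> ra \<le> cap14 p14 \<and> rb \<le> cap'' p13 p23 p34 p14}"

definition region_serial :: "real \<Rightarrow> real \<Rightarrow> real \<Rightarrow> real \<Rightarrow> (real \<times> real) set" where
  "region_serial p13 p23 p34 p14 = convex hull
     {(ra, rb). 0 \<le> ra \<and> 0 \<le> rb \<and> ra \<le> cap14 p14 \<and> rb \<le> cap' p13 p23 p34}"

definition region_joint :: "real \<Rightarrow> real \<Rightarrow> real \<Rightarrow> real \<Rightarrow> (real \<times> real) set" where
  "region_joint p13 p23 p34 p14 = convex hull
     {(ra, rb). 0 \<le> ra \<and> 0 \<le> rb
        \<and> ra \<le> cap14 p14 + cap' p13 p23 p34 - cap'' p13 p23 p34 p14
        \<and> rb \<le> cap' p13 p23 p34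
        \<and> ra + rb \<le> cap14 p14 + cap' p13 p23 p34}"

end

theory Submission
  imports Defs
begin

text \<open>The noise seen by node 4 through the relay is the XOR of the noises on
  1\<rightarrow>3, 2\<rightarrow>3 and 3\<rightarrow>4, and the noise of the combined observation decoded in
  network-then-channel decoding is that XOR further XORed with the noise on 1\<rightarrow>4.
  XORing in independent binary noise of crossover probability t maps a crossover
  probability q to (1 - t) q + t (1 - q), and this never decreases the binary
  entropy: by Gibbs' inequality H q and H (1 - q) are both bounded by the cross
  entropies against s = (1 - t) q + t (1 - q), whose t-mixture is exactly H s.
  Hence C'' \<le> C', and all inclusions follow by monotonicity of the convex hull.\<close>

lemma mult_ln_le_mult_ln_self:
  fixes x y :: real
  assumes "0 \<le> y" "0 < x"
  shows "y * ln x \<le> y * ln y + x - y"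
proof (cases "y = 0")
  case True
  then show ?thesis using assms by simp
next
  case False
  then have "0 < y" using assms by simp
  have "ln x - ln y = ln (x / y)" using \<open>0 < y\<close> assms by (simp add: ln_div)
  also have "\<dots> \<le> x / y - 1" using \<open>0 < y\<close> assms by (intro ln_le_minus_one) simp
  finally have "y * (ln x - ln y) \<le> y * (x / y - 1)"
    using \<open>0 < y\<close> by (simp add: mult_left_mono)
  then show ?thesis using \<open>0 < y\<close> by (simp add: algebra_simps)
qed

lemma bin_entropy_le_cross_entropy:
  fixes y s :: real
  assumes "0 \<le> y" "y \<le> 1" "0 < s" "s < 1"
  shows "bin_entropy y \<le> - y * log 2 s - (1 - y) * log 2 (1 - s)"
proof -
  have "y * ln s + (1 - y) * ln (1 - s) \<le> y * ln y + (1 - y) * ln (1 - y)"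
    using mult_ln_le_mult_ln_self[of y s] mult_ln_le_mult_ln_self[of "1 - y" "1 - s"] assms
    by simp
  then have "(y * ln s + (1 - y) * ln (1 - s)) / ln 2 \<le> (y * ln y + (1 - y) * ln (1 - y)) / ln 2"
    by (simp add: divide_right_mono)
  then show ?thesis unfolding bin_entropy_def log_def by (simp add: field_simps)
qed

lemma bin_entropy_one_minus: "bin_entropy (1 - p) = bin_entropy p"
  unfolding bin_entropy_def by (simp add: algebra_simps)

definition bsc_compose :: "real \<Rightarrow> real \<Rightarrow> real" where
  "bsc_compose p q = p * (1 - q) + (1 - p) * q"

lemma one_minus_bsc_compose: "1 - bsc_compose p q = p * q + (1 - p) * (1 - q)"
  unfolding bsc_compose_def by (simp add: algebra_simps)

lemma bsc_compose_bounds: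
  fixes p q :: real
  assumes "0 \<le> p" "p \<le> 1" "0 \<le> q" "q \<le> 1"
  shows "0 \<le> bsc_compose p q" "bsc_compose p q \<le> 1"
proof -
  show "0 \<le> bsc_compose p q" unfolding bsc_compose_def using assms by simp
  have "0 \<le> p * q + (1 - p) * (1 - q)" using assms by simp
  then show "bsc_compose p q \<le> 1" using one_minus_bsc_compose[of p q] by simp
qed

lemma bin_entropy_le_bin_entropy_bsc_compose:
  fixes q t :: real
  assumes "0 \<le> q" "q \<le> 1" "0 \<le> t" "t \<le> 1"
  shows "bin_entropy q \<le> bin_entropy (bsc_compose q t)"
proof (cases "bsc_compose q t = 0 \<or> bsc_compose q t = 1")
  case True
  \<comment> \<open>both weighted terms of s, respectively of 1 - s, vanish, which forces q \<in> {0, 1}\<close>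
  have "q * (1 - t) = 0 \<and> (1 - q) * t = 0 \<or> q * t = 0 \<and> (1 - q) * (1 - t) = 0"
    using True one_minus_bsc_compose[of q t] assms unfolding bsc_compose_def
    by (smt (verit) mult_nonneg_nonneg)
  then have "q = 0 \<or> q = 1" by auto
  then show ?thesis using True by (auto simp: bin_entropy_def)
next
  case False
  define s where "s = bsc_compose q t"
  have "0 < s" "s < 1"
    using False bsc_compose_bounds[OF assms] unfolding s_def by auto
  have "(1 - t) * bin_entropy q + t * bin_entropy (1 - q)
        \<le> (1 - t) * (- q * log 2 s - (1 - q) * log 2 (1 - s))
          + t * (- (1 - q) * log 2 s - q * log 2 (1 - s))"
    using bin_entropy_le_cross_entropy[OF _ _ \<open>0 < s\<close> \<open>s < 1\<close>, of q]
          bin_entropy_le_cross_entropy[OF _ _ \<open>0 < s\<close> \<open>s < 1\<close>, of "1 - q"] assms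
    by (intro add_mono mult_left_mono) simp_all
  also have "\<dots> = bin_entropy s"
    unfolding bin_entropy_def s_def one_minus_bsc_compose[symmetric]
    unfolding bsc_compose_def by (simp add: algebra_simps)
  finally show ?thesis unfolding s_def bin_entropy_one_minus by (simp add: algebra_simps)
qed

lemma p_prime_eq_bsc_compose: "p_prime p13 p23 p34 = bsc_compose (bsc_compose p13 p23) p34"
  unfolding p_prime_def bsc_compose_def by (simp add: algebra_simps)

lemma p_dprime_eq_bsc_compose: "p_dprime p13 p23 p34 p14 = bsc_compose (p_prime p13 p23 p34) p14"
  unfolding p_dprime_def p_prime_def bsc_compose_def by (simp add: algebra_simps)

lemma cap''_le_cap':
  fixes p13 p14 p23 p34 :: real
  assumes "0 \<le> p13" "p13 \<le> 1" "0 \<le> p14" "p14 \<le> 1"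
      and "0 \<le> p23" "p23 \<le> 1" "0 \<le> p34" "p34 \<le> 1"
  shows "cap'' p13 p23 p34 p14 \<le> cap' p13 p23 p34"
proof -
  have "0 \<le> p_prime p13 p23 p34" "p_prime p13 p23 p34 \<le> 1"
    unfolding p_prime_eq_bsc_compose using assms
    by (intro bsc_compose_bounds bsc_compose_bounds(1,2)[of p13 p23]; simp)+
  then show ?thesis
    unfolding cap''_def cap'_def p_dprime_eq_bsc_compose
    using bin_entropy_le_bin_entropy_bsc_compose assms by simp
qed

theorem theorem4:
  fixes p13 p14 p23 p34 :: real
  assumes "0 \<le> p13" "p13 \<le> 1" "0 \<le> p14" "p14 \<le> 1"
      and "0 \<le> p23" "p23 \<le> 1" "0 \<le> p34" "p34 \<le> 1"
  shows "region_nc p13 p23 p34 p14 \<subseteq> region_serial p13 p23 p34 p14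
       \<and> region_serial p13 p23 p34 p14 \<subseteq> region_joint p13 p23 p34 p14"
proof -
  have "cap'' p13 p23 p34 p14 \<le> cap' p13 p23 p34" using cap''_le_cap' assms .
  then show ?thesis unfolding region_nc_def region_serial_def region_joint_def
    by (intro conjI hull_mono) auto
qed

end
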